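(* Let $k$ be a field and let $r,s\in\mathbb{Z}$ be coprime. Then $r_\epsilon$ and $s_\epsilon$ generate the unit ideal of the Grothendieck–Witt ring $GW(k)$.
   Context: For $n\ge0$, $n_\epsilon:=\sum_{i=1}^n\langle(-1)^{i-1}\rangle\in GW(k)$, where $\langle a\rangle$ is the class of the rank one form $ax^2$; for $n<0$ one sets $n_\epsilon:=\epsilon\cdot(-n)_\epsilon$ with $\epsilon=-\langle-1\rangle$ (Morel's convention). *)

theory Defs
  imports "Jordan_Normal_Form.Matrix" "Jordan_Normal_Form.Determinant" "HOL-Computational_Algebra.Primes"
begin

text \<open>Symmetric bilinear forms over a field k are represented by their Gram matrices.  An element of
  GW(k) is represented by a virtual form, a pair (P, N) standing for [P] - [N].\<close>

definition nondeg_sym_form :: "'a::field mat \<Rightarrow> bool" where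
  "nondeg_sym_form B \<longleftrightarrow> square_mat B \<and> transpose_mat B = B \<and> invertible_mat B"

definition isometric :: "'a::field mat \<Rightarrow> 'a mat \<Rightarrow> bool" where
  "isometric B C \<longleftrightarrow> (\<exists>P. P \<in> carrier_mat (dim_row B) (dim_row C) \<and> invertible_mat P
      \<and> transpose_mat P * B * P = C)"

definition orth_sum :: "'a::field mat \<Rightarrow> 'a mat \<Rightarrow> 'a mat" where
  "orth_sum B C = four_block_mat B (0\<^sub>m (dim_row B) (dim_col C)) (0\<^sub>m (dim_row C) (dim_col B)) C"

definition tensor_form :: "'a::field mat \<Rightarrow> 'a mat \<Rightarrow> 'a mat" where
  "tensor_form A B = mat (dim_row A * dim_row B) (dim_col A * dim_col B)
     (\<lambda>(i, j). A $$ (i div dim_row B, j div dim_col B) * B $$ (i mod dim_row B, j mod dim_col B))"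

definition diag_form :: "'a::field list \<Rightarrow> 'a mat" where
  "diag_form xs = mat (length xs) (length xs) (\<lambda>(i, j). if i = j then xs ! i else 0)"

type_synonym 'a virtual_form = "'a mat \<times> 'a mat"

definition virtual_form :: "'a::field virtual_form \<Rightarrow> bool" where
  "virtual_form X \<longleftrightarrow> nondeg_sym_form (fst X) \<and> nondeg_sym_form (snd X)"

definition gw_eq :: "'a::field virtual_form \<Rightarrow> 'a virtual_form \<Rightarrow> bool" where
  "gw_eq X Y \<longleftrightarrow> (\<exists>E. nondeg_sym_form E \<and>
      isometric (orth_sum (orth_sum (fst X) (snd Y)) E) (orth_sum (orth_sum (fst Y) (snd X)) E))"

definition gw_zero :: "'a::field virtual_form" where
  "gw_zero = (diag_form [], diag_form [])"

definition gw_bracket :: "'a::field \<Rightarrow> 'a virtual_form" where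
  "gw_bracket a = (diag_form [a], diag_form [])"

definition gw_one :: "'a::field virtual_form" where
  "gw_one = gw_bracket 1"

definition gw_add :: "'a::field virtual_form \<Rightarrow> 'a virtual_form \<Rightarrow> 'a virtual_form" where
  "gw_add X Y = (orth_sum (fst X) (fst Y), orth_sum (snd X) (snd Y))"

definition gw_uminus :: "'a::field virtual_form \<Rightarrow> 'a virtual_form" where
  "gw_uminus X = (snd X, fst X)"

definition gw_mult :: "'a::field virtual_form \<Rightarrow> 'a virtual_form \<Rightarrow> 'a virtual_form" where
  "gw_mult X Y = (orth_sum (tensor_form (fst X) (fst Y)) (tensor_form (snd X) (snd Y)),
                  orth_sum (tensor_form (fst X) (snd Y)) (tensor_form (snd X) (fst Y)))"

definition gw_eps :: "'a::field virtual_form" where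
  "gw_eps = gw_uminus (gw_bracket (-1))"

fun gw_nat_eps :: "nat \<Rightarrow> 'a::field virtual_form" where
  "gw_nat_eps 0 = gw_zero"
| "gw_nat_eps (Suc n) = gw_add (gw_nat_eps n) (gw_bracket ((-1) ^ n))"

definition n_eps :: "int \<Rightarrow> 'a::field virtual_form" where
  "n_eps n = (if n \<ge> 0 then gw_nat_eps (nat n) else gw_mult gw_eps (gw_nat_eps (nat (- n))))"

end

theory Submission imports Defs "HOL-Combinatorics.Permutations"
begin

(* All forms involved (the n\<^sub>\<epsilon> and the coefficients constructed below) are diagonal with
   entries \<plusminus>1.  Such a virtual form [\<langle>xs\<rangle>] - [\<langle>ys\<rangle>] is determined in GW(k) by its rank
   |xs| - |ys| and its signature \<Sigma>xs - \<Sigma>ys, because a list of signs is determined up to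
   permutation by its length and its sum, and permuting diagonal entries is an isometry.  Rank and
   signature are additive and multiplicative, every pair (a, b) with a \<equiv> b (mod 2) occurs, and
   n\<^sub>\<epsilon> has rank n and signature n mod 2.  From x r + y s = 1 one gets x' \<equiv> x and y' \<equiv> y
   (mod 2) with x' (r mod 2) + y' (s mod 2) = 1; the forms X and Y with invariants (x, x') and
   (y, y') then make X r\<^sub>\<epsilon> + Y s\<^sub>\<epsilon> of rank 1 and signature 1, i.e. equal to \<langle>1\<rangle>. *)

definition perm_mat :: "nat \<Rightarrow> (nat \<Rightarrow> nat) \<Rightarrow> 'a::semiring_1 mat" where
  "perm_mat n p = mat n n (\<lambda>(i, j). of_bool (i = p j))"

lemma perm_mat_carrier [simp]: "perm_mat n p \<in> carrier_mat n n"
  by (simp add: perm_mat_def)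

lemma mult_perm_mat:
  assumes "A \<in> carrier_mat m n" "p permutes {..<n}"
  shows "A * perm_mat n p = mat m n (\<lambda>(i, j). A $$ (i, p j))"
proof (rule eq_matI)
  fix i j assume "i < dim_row (mat m n (\<lambda>(i, j). A $$ (i, p j)))"
    and "j < dim_col (mat m n (\<lambda>(i, j). A $$ (i, p j)))"
  moreover from this have "p j < n" using permutes_in_image[OF assms(2), of j] by simp
  ultimately show "(A * perm_mat n p) $$ (i, j) = mat m n (\<lambda>(i, j). A $$ (i, p j)) $$ (i, j)"
    using assms by (simp add: perm_mat_def scalar_prod_def)
qed (use assms in \<open>auto simp: perm_mat_def\<close>)

lemma transpose_perm_mat_mult:
  assumes "A \<in> carrier_mat n m" "p permutes {..<n}"
  shows "transpose_mat (perm_mat n p) * A = mat n m (\<lambda>(i, j). A $$ (p i, j))"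
proof (rule eq_matI)
  fix i j assume "i < dim_row (mat n m (\<lambda>(i, j). A $$ (p i, j)))"
    and "j < dim_col (mat n m (\<lambda>(i, j). A $$ (p i, j)))"
  moreover from this have "p i < n" using permutes_in_image[OF assms(2), of i] by simp
  ultimately show "(transpose_mat (perm_mat n p) * A) $$ (i, j) = mat n m (\<lambda>(i, j). A $$ (p i, j)) $$ (i, j)"
    using assms by (simp add: perm_mat_def scalar_prod_def)
qed (use assms in \<open>auto simp: perm_mat_def\<close>)

lemma perm_mat_congruence:
  assumes "A \<in> carrier_mat n n" "p permutes {..<n}"
  shows "transpose_mat (perm_mat n p) * A * perm_mat n p = mat n n (\<lambda>(i, j). A $$ (p i, p j))"
proof -
  have "transpose_mat (perm_mat n p) * A * perm_mat n p = mat n n (\<lambda>(i, j). A $$ (p i, j)) * perm_mat n p"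
    using assms by (simp add: transpose_perm_mat_mult)
  also have "\<dots> = mat n n (\<lambda>(i, j). mat n n (\<lambda>(i, j). A $$ (p i, j)) $$ (i, p j))"
    using assms(2) by (simp add: mult_perm_mat)
  also have "\<dots> = mat n n (\<lambda>(i, j). A $$ (p i, p j))"
    using permutes_in_image[OF assms(2)] by (intro cong_mat) auto
  finally show ?thesis .
qed

lemma invertible_perm_mat:
  assumes "p permutes {..<n}"
  shows "invertible_mat (perm_mat n p :: 'a::field mat)"
proof -
  let ?P = "perm_mat n p :: 'a mat"
  have "transpose_mat ?P * 1\<^sub>m n * ?P = mat n n (\<lambda>(i, j). 1\<^sub>m n $$ (p i, p j))"
    using assms by (simp add: perm_mat_congruence)
  also have "\<dots> = 1\<^sub>m n"
    using permutes_in_image[OF assms] permutes_inj[OF assms] by (intro eq_matI) (auto simp: inj_eq)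
  finally have left_inverse: "transpose_mat ?P * ?P = 1\<^sub>m n"
    using right_mult_one_mat[of "transpose_mat ?P" n n] by simp
  then have "?P * transpose_mat ?P = 1\<^sub>m n"
    by (rule mat_mult_left_right_inverse[rotated 2]) auto
  with left_inverse show ?thesis
    unfolding invertible_mat_def inverts_mat_def
    by (intro conjI exI[of _ "transpose_mat ?P"]) (auto simp: square_mat.simps perm_mat_def)
qed

lemma diag_form_dims [simp]:
  "dim_row (diag_form xs) = length xs" "dim_col (diag_form xs) = length xs"
  by (auto simp: diag_form_def)

lemma diag_form_index [simp]:
  "i < length xs \<Longrightarrow> j < length xs \<Longrightarrow> diag_form xs $$ (i, j) = (if i = j then xs ! i else 0)"
  by (auto simp: diag_form_def)

lemma diag_form_carrier [simp]: "diag_form xs \<in> carrier_mat (length xs) (length xs)"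
  by auto

lemma diag_form_mult:
  assumes "length xs = length ys"
  shows "diag_form xs * diag_form ys = diag_form (map2 (*) xs ys)"
proof (rule eq_matI)
  fix i j assume ij: "i < dim_row (diag_form (map2 (*) xs ys))" "j < dim_col (diag_form (map2 (*) xs ys))"
  have "(\<Sum>k = 0..<length ys. (if i = k then xs ! i else 0) * (if k = j then ys ! k else 0))
      = (\<Sum>k = 0..<length ys. if k = i then (if i = j then xs ! i * ys ! i else 0) else 0)"
    by (rule sum.cong) auto
  with assms ij show "(diag_form xs * diag_form ys) $$ (i, j) = diag_form (map2 (*) xs ys) $$ (i, j)"
    by (simp add: scalar_prod_def)
qed (use assms in auto)

lemma nondeg_sym_form_diag_form:
  assumes "0 \<notin> set xs"
  shows "nondeg_sym_form (diag_form xs)"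
proof -
  have nonzero: "xs ! i \<noteq> 0" if "i < length xs" for i
    using assms nth_mem[OF that] by auto
  have "diag_form xs * diag_form (map inverse xs) = 1\<^sub>m (length xs)"
    by (simp add: diag_form_mult) (intro eq_matI; simp add: nonzero)
  moreover have "diag_form (map inverse xs) * diag_form xs = 1\<^sub>m (length xs)"
    by (simp add: diag_form_mult) (intro eq_matI; simp add: nonzero)
  moreover have "transpose_mat (diag_form xs) = diag_form xs"
    by (intro eq_matI) auto
  ultimately show ?thesis
    unfolding nondeg_sym_form_def invertible_mat_def inverts_mat_def
    by (intro conjI exI[of _ "diag_form (map inverse xs)"]) (auto simp: square_mat.simps)
qed

lemma orth_sum_diag_form: "orth_sum (diag_form xs) (diag_form ys) = diag_form (xs @ ys)"
  unfolding orth_sum_def by (rule eq_matI) (auto simp: nth_append)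

lemma isometric_diag_form:
  assumes "mset xs = mset ys"
  shows "isometric (diag_form xs) (diag_form ys)"
proof -
  obtain p where p: "p permutes {..<length xs}" and ys: "ys = permute_list p xs"
    using mset_eq_permutation[OF assms[symmetric]] by metis
  let ?P = "perm_mat (length xs) p"
  have p_less: "p i < length xs" if "i < length xs" for i
    using permutes_in_image[OF p, of i] that by simp
  have "transpose_mat ?P * diag_form xs * ?P = mat (length xs) (length xs) (\<lambda>(i, j). diag_form xs $$ (p i, p j))"
    using p by (simp add: perm_mat_congruence)
  also have "\<dots> = diag_form ys"
    by (rule eq_matI) (simp_all add: ys p_less permute_list_nth[OF p] permutes_inj[OF p, THEN inj_eq])
  finally show ?thesis
    using p ys unfolding isometric_def by (intro exI[of _ ?P]) (simp add: invertible_perm_mat)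
qed

definition tensor_list :: "'b::times list \<Rightarrow> 'b list \<Rightarrow> 'b list" where
  "tensor_list xs ys = concat (map (\<lambda>x. map ((*) x) ys) xs)"

lemma tensor_list_Nil [simp]: "tensor_list [] ys = []"
  and tensor_list_Cons [simp]: "tensor_list (x # xs) ys = map ((*) x) ys @ tensor_list xs ys"
  by (simp_all add: tensor_list_def)

lemma length_tensor_list [simp]: "length (tensor_list xs ys) = length xs * length ys"
  by (induction xs) auto

lemma nth_tensor_list:
  "i < length xs * length ys \<Longrightarrow> tensor_list xs ys ! i = xs ! (i div length ys) * ys ! (i mod length ys)"
proof (induction xs arbitrary: i)
  case (Cons x xs)
  show ?case
  proof (cases "i < length ys")
    case True
    then show ?thesis by (simp add: nth_append)
  next
    case False
    with Cons.prems have "0 < length ys" "i - length ys < length xs * length ys"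
      by auto
    with False Cons.IH show ?thesis
      by (simp add: nth_append le_div_geq le_mod_geq)
  qed
qed simp

lemma set_tensor_list: "set (tensor_list xs ys) = {x * y | x y. x \<in> set xs \<and> y \<in> set ys}"
  by (auto simp: tensor_list_def)

lemma sum_list_tensor_list: "sum_list (tensor_list xs ys) = sum_list xs * (sum_list ys :: 'b::comm_semiring_1)"
  by (induction xs) (auto simp: sum_list_const_mult distrib_right)

lemma map_tensor_list:
  assumes "\<And>x y. f (x * y) = f x * f y"
  shows "map f (tensor_list xs ys) = tensor_list (map f xs) (map f ys)"
  by (induction xs) (simp_all add: assms)

lemma tensor_form_diag_form: "tensor_form (diag_form xs) (diag_form ys) = diag_form (tensor_list xs ys)"
proof (rule eq_matI)
  fix i j assume ij: "i < dim_row (diag_form (tensor_list xs ys))" "j < dim_col (diag_form (tensor_list xs ys))"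
  let ?n = "length ys"
  have "i div ?n < length xs" "j div ?n < length xs" "i mod ?n < ?n" "j mod ?n < ?n"
    using ij by (auto simp: less_mult_imp_div_less intro: mod_less_divisor)
  moreover have "i div ?n = j div ?n \<and> i mod ?n = j mod ?n \<longleftrightarrow> i = j"
    by (metis div_mult_mod_eq)
  ultimately show "tensor_form (diag_form xs) (diag_form ys) $$ (i, j) = diag_form (tensor_list xs ys) $$ (i, j)"
    using ij by (auto simp: tensor_form_def nth_tensor_list)
qed (auto simp: tensor_form_def)

definition sign_list :: "int list \<Rightarrow> bool" where
  "sign_list xs \<longleftrightarrow> set xs \<subseteq> {1, -1}"

lemma sign_list_simps [simp]:
  "sign_list []"
  "sign_list (x # xs) \<longleftrightarrow> (x = 1 \<or> x = -1) \<and> sign_list xs"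
  "sign_list (xs @ ys) \<longleftrightarrow> sign_list xs \<and> sign_list ys"
  by (auto simp: sign_list_def)

lemma sign_list_tensor_list:
  assumes "sign_list xs" "sign_list ys"
  shows "sign_list (tensor_list xs ys)"
proof -
  have "x * y \<in> {1, -1}" if "x \<in> {1, -1}" "y \<in> {1, -1}" for x y :: int
    using that by auto
  with assms show ?thesis
    unfolding sign_list_def set_tensor_list by blast
qed

lemma sign_list_length_sum:
  assumes "sign_list xs"
  shows "int (length xs) = int (count (mset xs) 1) + int (count (mset xs) (-1))"
    and "sum_list xs = int (count (mset xs) 1) - int (count (mset xs) (-1))"
  using assms by (induction xs) auto

lemma sign_list_mset_eqI:
  assumes "sign_list xs" "sign_list ys" "length xs = length ys" "sum_list xs = sum_list ys"
  shows "mset xs = mset ys"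
proof (rule multiset_eqI)
  fix x
  have plus: "count (mset xs) 1 = count (mset ys) 1"
    and minus: "count (mset xs) (-1) = count (mset ys) (-1)"
    using sign_list_length_sum[OF assms(1)] sign_list_length_sum[OF assms(2)] assms(3,4) by linarith+
  show "count (mset xs) x = count (mset ys) x"
  proof (cases "x = 1 \<or> x = -1")
    case False
    with assms(1,2) have "x \<notin> set xs" "x \<notin> set ys"
      by (auto simp: sign_list_def)
    then show ?thesis by (metis count_mset_0_iff)
  qed (use plus minus in auto)
qed

definition sign_form :: "int list \<Rightarrow> int list \<Rightarrow> 'a::field virtual_form" where
  "sign_form xs ys = (diag_form (map of_int xs), diag_form (map of_int ys))"

lemma virtual_form_sign_form:
  assumes "sign_list xs" "sign_list ys"
  shows "virtual_form (sign_form xs ys)"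
  using assms unfolding virtual_form_def sign_form_def sign_list_def
  by (force intro!: nondeg_sym_form_diag_form)

lemma gw_add_sign_form: "gw_add (sign_form xs ys) (sign_form xs' ys') = sign_form (xs @ xs') (ys @ ys')"
  by (simp add: sign_form_def gw_add_def orth_sum_diag_form)

lemma gw_mult_sign_form:
  "gw_mult (sign_form xs ys) (sign_form xs' ys') =
     sign_form (tensor_list xs xs' @ tensor_list ys ys') (tensor_list xs ys' @ tensor_list ys xs')"
  by (simp add: sign_form_def gw_mult_def orth_sum_diag_form tensor_form_diag_form map_tensor_list)

lemma gw_eq_sign_formI:
  assumes "mset (xs @ ys') = mset (xs' @ ys)"
  shows "gw_eq (sign_form xs ys) (sign_form xs' ys' :: 'a::field virtual_form)"
proof -
  have "mset (map (of_int :: int \<Rightarrow> 'a) (xs @ ys')) = mset (map of_int (xs' @ ys))"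
    using assms by (metis mset_map)
  then have "isometric (diag_form (map (of_int :: int \<Rightarrow> 'a) (xs @ ys') @ []))
      (diag_form (map of_int (xs' @ ys) @ []))"
    by (intro isometric_diag_form) simp
  moreover have "nondeg_sym_form (diag_form ([] :: 'a list))"
    by (rule nondeg_sym_form_diag_form) simp
  ultimately show ?thesis
    unfolding gw_eq_def by (intro exI[of _ "diag_form []"]) (simp add: sign_form_def orth_sum_diag_form)
qed

definition sign_form_with :: "'a::field virtual_form \<Rightarrow> int \<Rightarrow> int \<Rightarrow> bool" where
  "sign_form_with X rank signature \<longleftrightarrow> (\<exists>xs ys. X = sign_form xs ys \<and> sign_list xs \<and> sign_list ys
     \<and> int (length xs) - int (length ys) = rank \<and> sum_list xs - sum_list ys = signature)"

lemma sign_form_with_virtual_form: "sign_form_with X a b \<Longrightarrow> virtual_form X"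
  by (auto simp: sign_form_with_def virtual_form_sign_form)

lemma gw_eq_sign_form_with:
  assumes "sign_form_with X a b" "sign_form_with Y a b"
  shows "gw_eq X Y"
proof -
  obtain xs ys xs' ys' where X: "X = sign_form xs ys" and Y: "Y = sign_form xs' ys'"
    and signs: "sign_list xs" "sign_list ys" "sign_list xs'" "sign_list ys'"
    and "int (length xs) - int (length ys) = int (length xs') - int (length ys')"
    and "sum_list xs - sum_list ys = sum_list xs' - sum_list ys'"
    using assms unfolding sign_form_with_def by auto
  then have "mset (xs @ ys') = mset (xs' @ ys)"
    by (intro sign_list_mset_eqI) simp_all
  then show ?thesis
    unfolding X Y by (rule gw_eq_sign_formI)
qed

lemma sign_form_with_add:
  assumes "sign_form_with X a b" "sign_form_with Y c d"
  shows "sign_form_with (gw_add X Y) (a + c) (b + d)"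
  using assms unfolding sign_form_with_def
  by (fastforce simp: gw_add_sign_form)

lemma sign_form_with_mult:
  assumes "sign_form_with X a b" "sign_form_with Y c d"
  shows "sign_form_with (gw_mult X Y) (a * c) (b * d)"
proof -
  obtain xs ys xs' ys' where X: "X = sign_form xs ys" and Y: "Y = sign_form xs' ys'"
    and signs: "sign_list xs" "sign_list ys" "sign_list xs'" "sign_list ys'"
    and rank_sig: "int (length xs) - int (length ys) = a" "sum_list xs - sum_list ys = b"
      "int (length xs') - int (length ys') = c" "sum_list xs' - sum_list ys' = d"
    using assms unfolding sign_form_with_def by auto
  let ?xs = "tensor_list xs xs' @ tensor_list ys ys'" and ?ys = "tensor_list xs ys' @ tensor_list ys xs'"
  have "int (length ?xs) - int (length ?ys) = (int (length xs) - int (length ys)) * (int (length xs') - int (length ys'))"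
    by (simp add: algebra_simps)
  moreover have "sum_list ?xs - sum_list ?ys = (sum_list xs - sum_list ys) * (sum_list xs' - sum_list ys')"
    by (simp add: sum_list_tensor_list algebra_simps)
  ultimately show ?thesis
    unfolding sign_form_with_def X Y gw_mult_sign_form
    using signs rank_sig by (intro exI[of _ ?xs] exI[of _ ?ys]) (simp add: sign_list_tensor_list)
qed

lemma sign_form_with_exists:
  assumes "a mod 2 = b mod 2"
  obtains X :: "'a::field virtual_form" where "sign_form_with X a b"
proof -
  obtain q where q: "a - b = 2 * q"
    using assms by (metis dvd_def mod_eq_dvd_iff)
  define p where "p = b + q"
  have nat_diff: "int (nat z) - int (nat (- z)) = z" for z :: int
    by simp
  let ?xs = "replicate (nat p) 1 @ replicate (nat q) (-1 :: int)"
  let ?ys = "replicate (nat (- p)) 1 @ replicate (nat (- q)) (-1 :: int)"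
  have "int (length ?xs) - int (length ?ys) = (int (nat p) - int (nat (- p))) + (int (nat q) - int (nat (- q)))"
    by simp
  also have "\<dots> = a"
    using q by (simp add: nat_diff p_def)
  finally have rank: "int (length ?xs) - int (length ?ys) = a" .
  have "sum_list ?xs - sum_list ?ys = (int (nat p) - int (nat (- p))) - (int (nat q) - int (nat (- q)))"
    by (simp add: sum_list_replicate)
  also have "\<dots> = b"
    by (simp add: nat_diff p_def)
  finally have signature: "sum_list ?xs - sum_list ?ys = b" .
  have "sign_list ?xs" "sign_list ?ys"
    by (auto simp: sign_list_def)
  with rank signature have "sign_form_with (sign_form ?xs ?ys :: 'a virtual_form) a b"
    unfolding sign_form_with_def by blast
  then show ?thesis ..
qed

lemma sign_form_with_sign_form:
  "sign_list xs \<Longrightarrow> sign_list ys \<Longrightarrow>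
     sign_form_with (sign_form xs ys) (int (length xs) - int (length ys)) (sum_list xs - sum_list ys)"
  unfolding sign_form_with_def by blast

lemma sign_form_with_gw_one: "sign_form_with gw_one 1 1"
  using sign_form_with_sign_form[of "[1]" "[]"]
  by (simp add: gw_one_def gw_bracket_def sign_form_def)

lemma sign_form_with_gw_eps: "sign_form_with gw_eps (-1) 1"
  using sign_form_with_sign_form[of "[]" "[-1]"]
  by (simp add: gw_eps_def gw_uminus_def gw_bracket_def sign_form_def)

lemma sign_form_with_gw_nat_eps:
  "sign_form_with (gw_nat_eps n :: 'a::field virtual_form) (int n) (int (n mod 2))"
proof (induction n)
  case 0
  show ?case
    using sign_form_with_sign_form[of "[]" "[]"] by (simp add: gw_zero_def sign_form_def)
next
  case (Suc n)
  have "(-1 :: int) ^ n = 1 \<or> (-1 :: int) ^ n = -1"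
    by (cases "even n") simp_all
  then have "sign_form_with (gw_bracket ((-1) ^ n) :: 'a virtual_form) 1 ((-1) ^ n)"
    using sign_form_with_sign_form[of "[(-1) ^ n]" "[]"]
    by (simp add: gw_bracket_def sign_form_def)
  from sign_form_with_add[OF Suc.IH this]
  have "sign_form_with (gw_nat_eps (Suc n) :: 'a virtual_form) (int n + 1) (int (n mod 2) + (-1) ^ n)"
    by simp
  moreover have "int (n mod 2) + (-1) ^ n = int (Suc n mod 2)"
    by (cases "even n") (auto elim!: evenE oddE)
  ultimately show ?case
    by (simp add: add.commute)
qed

lemma sign_form_with_n_eps: "sign_form_with (n_eps r) r (r mod 2)"
proof (cases "r \<ge> 0")
  case True
  then show ?thesis
    using sign_form_with_gw_nat_eps[of "nat r"] by (simp add: n_eps_def zmod_int)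
next
  case False
  have "(- r) mod 2 = r mod 2"
    by presburger
  with False show ?thesis
    using sign_form_with_mult[OF sign_form_with_gw_eps sign_form_with_gw_nat_eps[of "nat (- r)"]]
    by (simp add: n_eps_def zmod_int)
qed

lemma bezout_parity_lift:
  fixes x y r s :: int
  assumes "x * r + y * s = 1"
  obtains x' y' where "x mod 2 = x' mod 2" "y mod 2 = y' mod 2" "x' * (r mod 2) + y' * (s mod 2) = 1"
proof -
  have "odd (x * (r mod 2) + y * (s mod 2))"
    using arg_cong[where f = even, OF assms] by simp
  then obtain k where k: "x * (r mod 2) + y * (s mod 2) = 2 * k + 1"
    by (rule oddE)
  have shift: "(z - 2 * k) mod 2 = z mod 2" for z
    by presburger
  show thesis
  proof (cases "odd r")
    case True
    with k show thesis
      by (intro that[of "x - 2 * k" y]) (auto simp: shift odd_iff_mod_2_eq_one)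
  next
    case False
    with k have "odd (y * (s mod 2))"
      by (simp add: even_iff_mod_2_eq_zero)
    then have "s mod 2 = 1"
      by (simp add: odd_iff_mod_2_eq_one)
    with False k show thesis
      by (intro that[of x "y - 2 * k"]) (auto simp: shift even_iff_mod_2_eq_zero)
  qed
qed

theorem lemma2p10:
  fixes r s :: int
  assumes "coprime r s"
  shows "\<exists>X Y :: 'a::field virtual_form. virtual_form X \<and> virtual_form Y \<and>
           gw_eq (gw_add (gw_mult X (n_eps r)) (gw_mult Y (n_eps s))) gw_one"
proof -
  obtain x y where bezout: "x * r + y * s = 1"
    using bezout_int[of r s] assms by auto
  then obtain x' y' where "x mod 2 = x' mod 2" "y mod 2 = y' mod 2"
    and bezout_mod_2: "x' * (r mod 2) + y' * (s mod 2) = 1"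
    by (rule bezout_parity_lift)
  then obtain X Y :: "'a virtual_form" where X: "sign_form_with X x x'" and Y: "sign_form_with Y y y'"
    using sign_form_with_exists by metis
  have "sign_form_with (gw_add (gw_mult X (n_eps r)) (gw_mult Y (n_eps s)))
      (x * r + y * s) (x' * (r mod 2) + y' * (s mod 2))"
    by (intro sign_form_with_add sign_form_with_mult X Y sign_form_with_n_eps)
  then have "gw_eq (gw_add (gw_mult X (n_eps r)) (gw_mult Y (n_eps s))) gw_one"
    unfolding bezout bezout_mod_2 using sign_form_with_gw_one by (rule gw_eq_sign_form_with)
  with X Y show ?thesis
    by (blast intro: sign_form_with_virtual_form)
qed

end
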